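(* Let $n$ and $r$ be positive integers with $n\geq 2r$. For positive integers $l,k$ define the rational number $$m_r(l,k):=\frac{1}{k}\left(lr-\sum_{i=1}^{k-1}i\binom{l}{i}\right).$$ Let $l$ be the minimal positive integer such that there exists a positive integer $k\leq l+1$ satisfying $$0\leq m_r(l,k)\leq\binom{l}{k}\quad\text{and}\quad \sum_{i=0}^{k-1}\binom{l}{i}+m_r(l,k)\geq n.$$ Then $b(\mathrm{S}_{n,r})=b(\mathrm{A}_{n+1,r})=l$.
   Context: For a permutation group $G$ acting on a set $\Omega$, a base is a subset $\mathcal{B}\subseteq\Omega$ whose pointwise stabiliser in $G$ is trivial, and $b(G)$ denotes the minimum size of a base. Write $[n]=\{1,\dots,n\}$. $\mathrm{S}_{n,r}$ denotes the symmetric group $\mathrm{S}_n$ acting naturally on the set of $r$-element subsets of $[n]$, and $\mathrm{A}_{n+1,r}$ denotes the alternating group $\mathrm{A}_{n+1}$ acting naturally on the set of $r$-element subsets of $[n+1]$. Binomial coefficients $\binom{l}{k}$ with $k>l$ are $0$. *)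

theory Defs
  imports "HOL-Combinatorics.Permutations" Complex_Main
begin

definition r_subsets :: "nat \<Rightarrow> nat \<Rightarrow> nat set set" where
  "r_subsets N r = {A. A \<subseteq> {1..N} \<and> card A = r}"

definition Sym :: "nat \<Rightarrow> (nat \<Rightarrow> nat) set" where
  "Sym n = {\<sigma>. \<sigma> permutes {1..n}}"

definition Alt :: "nat \<Rightarrow> (nat \<Rightarrow> nat) set" where
  "Alt n = {\<sigma>. \<sigma> permutes {1..n} \<and> evenperm \<sigma>}"

definition is_base :: "(nat \<Rightarrow> nat) set \<Rightarrow> nat set set \<Rightarrow> nat set set \<Rightarrow> bool" where
  "is_base G \<Omega> B \<longleftrightarrow> B \<subseteq> \<Omega> \<and> (\<forall>g\<in>G. (\<forall>A\<in>B. g ` A = A) \<longrightarrow> g = id)"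

definition base_size :: "(nat \<Rightarrow> nat) set \<Rightarrow> nat set set \<Rightarrow> nat" where
  "base_size G \<Omega> = (LEAST k. \<exists>B. is_base G \<Omega> B \<and> finite B \<and> card B = k)"

definition m_r :: "nat \<Rightarrow> nat \<Rightarrow> nat \<Rightarrow> rat" where
  "m_r r l k = (of_nat (l * r) - (\<Sum>i=1..k-1. of_nat (i * (l choose i)))) / of_nat k"

definition good_l :: "nat \<Rightarrow> nat \<Rightarrow> nat \<Rightarrow> bool" where
  "good_l n r l \<longleftrightarrow> (\<exists>k. 0 < k \<and> k \<le> l + 1 \<and>
      0 \<le> m_r r l k \<and> m_r r l k \<le> of_nat (l choose k) \<and>
      (\<Sum>i=0..k-1. of_nat (l choose i)) + m_r r l k \<ge> of_nat n)"

end

theory Submission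
  imports Defs
begin

(* For a family B of r-subsets of [N], a permutation fixes every member of B iff it preserves
   the star x \<mapsto> {A \<in> B. x \<in> A} of every point. So B is a base of S_N iff the stars of the
   points of [N] are pairwise distinct, and a base of A_N iff they are distinct once one point is
   removed. In either case a base with l members gives n distinct subsets (stars) of an l-set of
   total size at most l r, and a deficiency count shows that this forces good_l n r l.
   Conversely, good_l n r l yields such a family (all sets of size below k and m_r(l,k) sets of
   size k); exchanging members balances it until every point lies in exactly r of them, and its
   dual is then a family of at most l r-subsets of [n] with distinct stars, a base of both groups. *)

definition star :: "nat set set \<Rightarrow> nat \<Rightarrow> nat set set" where
  "star F x = {S \<in> F. x \<in> S}"

definition subsets_below_count :: "nat \<Rightarrow> nat \<Rightarrow> nat" where
  "subsets_below_count l k = (\<Sum>i<k. l choose i)"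

definition subsets_below_weight :: "nat \<Rightarrow> nat \<Rightarrow> nat" where
  "subsets_below_weight l k = (\<Sum>i<k. i * (l choose i))"

lemma subsets_below_weight_Suc:
  "subsets_below_weight l (Suc k) = subsets_below_weight l k + k * (l choose k)"
  by (simp add: subsets_below_weight_def)

lemma subsets_below_weight_Suc_self: "subsets_below_weight l (Suc l) = l * 2 ^ (l - 1)"
  using choose_linear_sum[of l] by (simp add: subsets_below_weight_def lessThan_Suc_atMost)

lemma sum_card_subsets_below:
  fixes f :: "nat \<Rightarrow> nat"
  assumes "finite C"
  shows "(\<Sum>S | S \<subseteq> C \<and> card S < k. f (card S)) = (\<Sum>i<k. (card C choose i) * f i)"
proof (induction k)
  case 0
  then show ?case by simp
next
  case (Suc k)
  have by_size: "{S. S \<subseteq> C \<and> card S < Suc k} = {S. S \<subseteq> C \<and> card S < k} \<union> {S. S \<subseteq> C \<and> card S = k}"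
    by auto
  have fin: "finite {S. S \<subseteq> C \<and> card S < k}" "finite {S. S \<subseteq> C \<and> card S = k}"
    using assms by (auto intro: finite_subset[of _ "Pow C"])
  have "(\<Sum>S | S \<subseteq> C \<and> card S = k. f (card S)) = (card C choose k) * f k"
    using n_subsets[OF assms, of k] by simp
  then show ?case
    unfolding by_size using Suc fin by (subst sum.union_disjoint) auto
qed

lemma card_subsets_below:
  "finite C \<Longrightarrow> card {S. S \<subseteq> C \<and> card S < k} = subsets_below_count (card C) k"
  using sum_card_subsets_below[of C "\<lambda>_. 1" k] by (simp add: subsets_below_count_def)

lemma weight_subsets_below:
  "finite C \<Longrightarrow> (\<Sum>S | S \<subseteq> C \<and> card S < k. card S) = subsets_below_weight (card C) k"
  using sum_card_subsets_below[of C id k] by (simp add: subsets_below_weight_def mult.commute)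

lemma m_r_eq:
  assumes "0 < k"
  shows "m_r r l k = (of_nat (l * r) - of_nat (subsets_below_weight l k)) / of_nat k"
proof -
  have "{1..k-1} = {..<k} - {0}" using assms by auto
  then have "(\<Sum>i=1..k-1. i * (l choose i)) = subsets_below_weight l k"
    by (simp add: subsets_below_weight_def sum_diff1_nat)
  then show ?thesis unfolding m_r_def by (metis of_nat_sum)
qed

lemma good_l_iff:
  "good_l n r l \<longleftrightarrow> (\<exists>k. 0 < k \<and> k \<le> l + 1
      \<and> subsets_below_weight l k \<le> l * r \<and> l * r \<le> subsets_below_weight l (Suc k)
      \<and> n * k + subsets_below_weight l k \<le> subsets_below_count l k * k + l * r)"
proof -
  have "(0 \<le> m_r r l k \<and> m_r r l k \<le> of_nat (l choose k)
        \<and> of_nat n \<le> (\<Sum>i=0..k-1. of_nat (l choose i)) + m_r r l k) \<longleftrightarrow>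
      (subsets_below_weight l k \<le> l * r \<and> l * r \<le> subsets_below_weight l (Suc k)
        \<and> n * k + subsets_below_weight l k \<le> subsets_below_count l k * k + l * r)"
    if "0 < k" for k
  proof -
    define w where "w = subsets_below_weight l k"
    define N where "N = subsets_below_count l k"
    have "{0..k-1} = {..<k}" using that by auto
    then have N: "(\<Sum>i=0..k-1. of_nat (l choose i)) = (of_nat N :: rat)"
      by (simp add: N_def subsets_below_count_def)
    have k: "(0::rat) < of_nat k" using that by simp
    show ?thesis
      unfolding m_r_eq[OF that] N subsets_below_weight_Suc w_def[symmetric] N_def[symmetric]
      using k by (simp add: field_simps flip: of_nat_mult of_nat_add)
  qed
  then show ?thesis unfolding good_l_def by (metis (no_types, lifting))
qed

lemma family_deficit_bound:
  assumes "finite C" "V \<subseteq> Pow C"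
  shows "card V * k + subsets_below_weight (card C) k
           \<le> subsets_below_count (card C) k * k + (\<Sum>v\<in>V. card v)"
proof -
  have "(\<Sum>v\<in>V. k - card v) \<le> (\<Sum>S\<in>Pow C. k - card S)"
    using assms by (intro sum_mono2) auto
  also have "\<dots> = (\<Sum>S | S \<subseteq> C \<and> card S < k. k - card S)"
    using assms(1) by (intro sum.mono_neutral_right) auto
  also have "\<dots> = (\<Sum>i<k. (card C choose i) * (k - i))"
    using sum_card_subsets_below[OF assms(1), of "\<lambda>i. k - i"] by simp
  finally have deficit: "(\<Sum>v\<in>V. k - card v) \<le> (\<Sum>i<k. (card C choose i) * (k - i))" .
  have "(\<Sum>i<k. (card C choose i) * (k - i)) + subsets_below_weight (card C) k
          = subsets_below_count (card C) k * k"
    unfolding subsets_below_weight_def subsets_below_count_def sum_distrib_right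
      sum.distrib[symmetric]
    by (rule sum.cong) (auto simp: algebra_simps diff_mult_distrib2)
  moreover have "card V * k \<le> (\<Sum>v\<in>V. k - card v) + (\<Sum>v\<in>V. card v)"
  proof -
    have "(\<Sum>v\<in>V. k) \<le> (\<Sum>v\<in>V. k - card v + card v)"
      by (rule sum_mono) simp
    then have "card V * k \<le> (\<Sum>v\<in>V. k - card v + card v)"
      by simp
    then show ?thesis by (simp add: sum.distrib)
  qed
  ultimately show ?thesis using deficit by linarith
qed

lemma good_l_of_family:
  assumes "finite C" "V \<subseteq> Pow C" "n \<le> card V" "(\<Sum>v\<in>V. card v) \<le> card C * r"
    and "2 * r \<le> n" "0 < r"
  shows "0 < card C \<and> good_l n r (card C)"
proof -
  define l where "l = card C"
  have "card V \<le> 2 ^ l"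
    using assms(1,2) card_mono[of "Pow C" V] by (simp add: card_Pow l_def)
  then have "2 * r \<le> 2 ^ l" using assms(3,5) by linarith
  then have "0 < l" using assms(6) by (cases l) auto
  have "2 * r \<le> 2 * 2 ^ (l - 1)"
    using \<open>2 * r \<le> 2 ^ l\<close> \<open>0 < l\<close> by (metis Suc_diff_1 power_Suc)
  then have top: "l * r \<le> subsets_below_weight l (Suc l)"
    by (simp add: subsets_below_weight_Suc_self)
  define P where "P k \<longleftrightarrow> 0 < k \<and> l * r \<le> subsets_below_weight l (Suc k)" for k
  define k where "k = (LEAST k. P k)"
  have "P l" using top \<open>0 < l\<close> by (simp add: P_def)
  then have "P k" "k \<le> l" unfolding k_def by (auto intro: LeastI Least_le)
  have below: "subsets_below_weight l k \<le> l * r"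
  proof (cases "k = 1")
    case True
    then show ?thesis by (simp add: subsets_below_weight_def)
  next
    case False
    then have "\<not> P (k - 1)" using \<open>P k\<close> not_less_Least[of "k - 1" P] by (simp add: P_def k_def)
    then show ?thesis using \<open>P k\<close> False by (simp add: P_def)
  qed
  have "n * k + subsets_below_weight l k \<le> subsets_below_count l k * k + l * r"
    using family_deficit_bound[OF assms(1,2), of k] assms(3,4) mult_le_mono1[OF assms(3), of k]
    unfolding l_def by linarith
  then have "good_l n r l"
    unfolding good_l_iff using \<open>P k\<close> \<open>k \<le> l\<close> below by (auto simp: P_def)
  then show ?thesis using \<open>0 < l\<close> l_def by simp
qed

lemma exists_family_subsets_below_and_some_of_size:
  assumes "finite C" "q \<le> card C choose k"
  shows "\<exists>H \<subseteq> Pow C. card H = subsets_below_count (card C) k + q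
           \<and> (\<Sum>S\<in>H. card S) = subsets_below_weight (card C) k + k * q"
proof -
  have "q \<le> card {S. S \<subseteq> C \<and> card S = k}" using assms by (simp add: n_subsets)
  then obtain K where K: "K \<subseteq> {S. S \<subseteq> C \<and> card S = k}" "card K = q"
    by (meson obtain_subset_with_card_n)
  define P where "P = {S. S \<subseteq> C \<and> card S < k}"
  have fin: "finite P" "finite K"
    using assms(1) K(1) by (auto simp: P_def intro: finite_subset[of _ "Pow C"])
  have disj: "P \<inter> K = {}" using K(1) by (auto simp: P_def)
  have "(\<Sum>S\<in>K. card S) = (\<Sum>S\<in>K. k)" using K(1) by (intro sum.cong) auto
  then have "(\<Sum>S\<in>P \<union> K. card S) = subsets_below_weight (card C) k + k * q"
    using weight_subsets_below[OF assms(1)] fin disj K(2) by (simp add: P_def sum.union_disjoint)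
  moreover have "card (P \<union> K) = subsets_below_count (card C) k + q"
    using card_subsets_below[OF assms(1)] fin disj K(2) by (simp add: P_def card_Un_disjoint)
  moreover have "P \<union> K \<subseteq> Pow C" using K(1) by (auto simp: P_def)
  ultimately show ?thesis by blast
qed

lemma family_of_good_l:
  assumes "finite C" "good_l n r (card C)"
  shows "\<exists>F \<subseteq> Pow C. card F = n \<and> (\<Sum>S\<in>F. card S) \<le> card C * r"
proof -
  define l where "l = card C"
  obtain k where k: "0 < k" "subsets_below_weight l k \<le> l * r"
      "l * r \<le> subsets_below_weight l (Suc k)"
      "n * k + subsets_below_weight l k \<le> subsets_below_count l k * k + l * r"
    using assms(2) unfolding good_l_iff l_def by blast
  \<comment> \<open>q is the integer part of m_r r l k.\<close>
  define q where "q = (l * r - subsets_below_weight l k) div k"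
  have "l * r - subsets_below_weight l k \<le> k * (l choose k)"
    using k(3) by (simp add: subsets_below_weight_Suc)
  then have "q \<le> l choose k"
    using div_le_mono[of _ "k * (l choose k)" k] k(1) by (simp add: q_def)
  then obtain H where H: "H \<subseteq> Pow C" "card H = subsets_below_count l k + q"
      "(\<Sum>S\<in>H. card S) = subsets_below_weight l k + k * q"
    using exists_family_subsets_below_and_some_of_size[OF assms(1), of q k] unfolding l_def by blast
  have "(n - subsets_below_count l k) * k \<le> l * r - subsets_below_weight l k"
    using k(4) by (simp add: diff_mult_distrib)
  then have "n - subsets_below_count l k \<le> q"
    unfolding q_def using less_eq_div_iff_mult_less_eq[OF k(1)] by blast
  then have "n \<le> card H" using H(2) by linarith
  then obtain F where F: "F \<subseteq> H" "card F = n" by (meson obtain_subset_with_card_n)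
  have "finite H" using H(1) assms(1) finite_subset by blast
  then have "(\<Sum>S\<in>F. card S) \<le> (\<Sum>S\<in>H. card S)" using F(1) by (intro sum_mono2) auto
  also have "\<dots> \<le> l * r"
    using H(3) k(2) times_div_less_eq_dividend[of k "l * r - subsets_below_weight l k"]
    unfolding q_def by linarith
  finally show ?thesis using F H(1) l_def by blast
qed

lemma sum_card_eq_sum_card_star:
  assumes "finite C" "F \<subseteq> Pow C"
  shows "(\<Sum>S\<in>F. card S) = (\<Sum>a\<in>C. card (star F a))"
proof -
  have "finite F" using assms finite_subset by blast
  have "(\<Sum>S\<in>F. card S) = (\<Sum>S\<in>F. \<Sum>a\<in>C. if a \<in> S then 1 else 0)"
  proof (rule sum.cong)
    fix S assume "S \<in> F"
    then have "S \<inter> C = S" using assms(2) by auto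
    then show "card S = (\<Sum>a\<in>C. if a \<in> S then 1 else 0)"
      using assms(1) by (simp add: sum.If_cases Int_commute)
  qed simp
  also have "\<dots> = (\<Sum>a\<in>C. \<Sum>S\<in>F. if a \<in> S then 1 else 0)" by (rule sum.swap)
  also have "\<dots> = (\<Sum>a\<in>C. card (star F a))"
    using \<open>finite F\<close> by (simp add: star_def sum.If_cases Int_def)
  finally show ?thesis .
qed

lemma card_star_exchange:
  assumes "finite F" "S \<in> F" "S' \<notin> F"
  shows "card (star (insert S' (F - {S})) x) + (if x \<in> S then 1 else 0)
           = card (star F x) + (if x \<in> S' then 1 else 0)"
proof -
  have fin: "finite (star F x)" using assms(1) by (simp add: star_def)
  have removed: "card (star F x - {S}) + (if x \<in> S then 1 else 0) = card (star F x)"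
    using assms(2) fin card_gt_0_iff[of "star F x"]
    by (auto simp: star_def card_Diff_singleton_if)
  have "S' \<notin> star F x - {S}" using assms(3) by (simp add: star_def)
  moreover have "star (insert S' (F - {S})) x = insert S' (star F x - {S})" if "x \<in> S'"
    using that by (auto simp: star_def)
  moreover have "star (insert S' (F - {S})) x = star F x - {S}" if "x \<notin> S'"
    using that by (auto simp: star_def)
  ultimately show ?thesis using removed fin by (cases "x \<in> S'") auto
qed

lemma exchange_family:
  assumes "finite F" "S \<in> F" "S' \<notin> F"
  shows "card (insert S' (F - {S})) = card F"
    and "(\<Sum>T\<in>insert S' (F - {S}). card T) + card S = (\<Sum>T\<in>F. card T) + card S'"
  using assms card_gt_0_iff[of F] by (auto simp: card_Diff_singleton sum.remove)

definition imbalance :: "nat set \<Rightarrow> nat \<Rightarrow> nat set set \<Rightarrow> nat" where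
  "imbalance C r F = (\<Sum>a\<in>C. (card (star F a) - r) + (r - card (star F a)))"

lemma imbalance_exchange_less:
  assumes "finite C" "F \<subseteq> Pow C" "S \<in> F" "a \<in> C" "a \<notin> S" "X \<subseteq> S"
    and "insert a (S - X) \<notin> F" "card (star F a) < r" "\<forall>x\<in>X. r < card (star F x)"
  shows "imbalance C r (insert (insert a (S - X)) (F - {S})) < imbalance C r F"
proof -
  define F' where "F' = insert (insert a (S - X)) (F - {S})"
  have "finite F" using assms(1,2) finite_subset by blast
  note exch = card_star_exchange[OF \<open>finite F\<close> assms(3,7), folded F'_def]
  have step: "(card (star F' x) - r) + (r - card (star F' x))
                \<le> (card (star F x) - r) + (r - card (star F x))" for x
  proof -
    consider "x = a" | "x \<in> X" | "x \<noteq> a" "x \<notin> X" by blast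
    then show ?thesis
    proof cases
      case 1
      then show ?thesis using exch[of x] assms(5,8) by simp
    next
      case 2
      then have "x \<in> S" "x \<noteq> a" "r < card (star F x)" using assms(5,6,9) by auto
      with 2 show ?thesis using exch[of x] by simp
    next
      case 3
      then show ?thesis using exch[of x] by (cases "x \<in> S") auto
    qed
  qed
  have "card (star F' a) = card (star F a) + 1" using exch[of a] assms(5) by simp
  then have "(card (star F' a) - r) + (r - card (star F' a))
               < (card (star F a) - r) + (r - card (star F a))"
    using assms(8) by simp
  then show ?thesis
    unfolding imbalance_def F'_def[symmetric]
    by (intro sum_strict_mono_ex1[OF assms(1)]) (use step assms(4) in auto)
qed

lemma exists_shift:
  assumes "finite F" "card (star F a) < card (star F c)"
  shows "\<exists>S\<in>F. c \<in> S \<and> a \<notin> S \<and> insert a (S - {c}) \<notin> F"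
proof (rule ccontr)
  assume contra: "\<not> ?thesis"
  define A where "A = {S\<in>F. c \<in> S \<and> a \<notin> S}"
  define B where "B = {S\<in>F. a \<in> S \<and> c \<notin> S}"
  have "a \<noteq> c" using assms(2) by auto
  have "inj_on (\<lambda>S. insert a (S - {c})) A"
  proof (rule inj_onI)
    fix S T assume "S \<in> A" "T \<in> A" "insert a (S - {c}) = insert a (T - {c})"
    then have "S - {c} = T - {c}" "c \<in> S" "c \<in> T" by (auto simp: A_def insert_ident)
    then show "S = T" by (metis insert_Diff)
  qed
  moreover have "(\<lambda>S. insert a (S - {c})) ` A \<subseteq> B"
    using contra \<open>a \<noteq> c\<close> by (auto simp: A_def B_def)
  ultimately have "card A \<le> card B"
    using assms(1) by (intro card_inj_on_le) (auto simp: B_def)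
  define M where "M = {S\<in>F. a \<in> S \<and> c \<in> S}"
  have "star F c = A \<union> M" "star F a = B \<union> M" "A \<inter> M = {}" "B \<inter> M = {}"
    by (auto simp: star_def A_def B_def M_def)
  moreover have "finite A" "finite B" "finite M"
    using assms(1) by (auto simp: A_def B_def M_def)
  ultimately show False
    using assms(2) \<open>card A \<le> card B\<close> card_Un_disjoint[of A M] card_Un_disjoint[of B M] by simp
qed

lemma exists_extension:
  assumes "finite F" "2 * card (star F a) < card F"
  shows "\<exists>S\<in>F. a \<notin> S \<and> insert a S \<notin> F"
proof (rule ccontr)
  assume contra: "\<not> ?thesis"
  define A where "A = {S\<in>F. a \<notin> S}"
  have "inj_on (insert a) A"
    by (rule inj_onI) (auto simp: A_def insert_ident)
  moreover have "insert a ` A \<subseteq> star F a"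
    using contra by (auto simp: A_def star_def)
  ultimately have "card A \<le> card (star F a)"
    using assms(1) by (intro card_inj_on_le) (auto simp: star_def)
  moreover have "F = A \<union> star F a" "A \<inter> star F a = {}"
    by (auto simp: A_def star_def)
  ultimately show False
    using assms card_Un_disjoint[of A "star F a"] by (auto simp: A_def star_def)
qed

lemma exists_deficient_point:
  assumes "finite C" "F \<subseteq> Pow C" "(\<Sum>S\<in>F. card S) \<le> card C * r"
    and "\<exists>a\<in>C. card (star F a) \<noteq> r"
  shows "\<exists>a\<in>C. card (star F a) < r"
proof (rule ccontr)
  assume "\<not> ?thesis"
  then have ge: "\<forall>x\<in>C. r \<le> card (star F x)" by (simp add: not_less)
  obtain c where "c \<in> C" "card (star F c) \<noteq> r" using assms(4) by blast
  then have "r < card (star F c)" using ge by force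
  then have "(\<Sum>x\<in>C. r) < (\<Sum>x\<in>C. card (star F x))"
    using ge \<open>c \<in> C\<close> by (intro sum_strict_mono_ex1[OF assms(1)]) auto
  then show False using assms(3) sum_card_eq_sum_card_star[OF assms(1,2)] by simp
qed

lemma imbalance_decreasing_step:
  assumes "finite C" "F \<subseteq> Pow C" "2 * r \<le> card F" "(\<Sum>S\<in>F. card S) \<le> card C * r"
    and "\<exists>a\<in>C. card (star F a) \<noteq> r"
  shows "\<exists>F' \<subseteq> Pow C. card F' = card F \<and> (\<Sum>S\<in>F'. card S) \<le> card C * r
           \<and> imbalance C r F' < imbalance C r F"
proof -
  have "finite F" using assms(1,2) finite_subset by blast
  have handshake: "(\<Sum>S\<in>F. card S) = (\<Sum>a\<in>C. card (star F a))"
    using sum_card_eq_sum_card_star[OF assms(1,2)] .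
  obtain a where a: "a \<in> C" "card (star F a) < r"
    using exists_deficient_point[OF assms(1,2,4,5)] by blast
  \<comment> \<open>Add a to a member S of F, removing an overfull point from S if there is one (X = {c});
    otherwise the total size has room for the extra element (X = {}).\<close>
  obtain S X where S: "S \<in> F" "a \<notin> S" "X \<subseteq> S" "insert a (S - X) \<notin> F"
      "\<forall>x\<in>X. r < card (star F x)" "(\<Sum>S\<in>F. card S) + 1 \<le> card C * r + card X"
  proof (cases "\<exists>c\<in>C. r < card (star F c)")
    case True
    then obtain c where "c \<in> C" "r < card (star F c)" by blast
    then obtain S where "S \<in> F" "c \<in> S" "a \<notin> S" "insert a (S - {c}) \<notin> F"
      using exists_shift[OF \<open>finite F\<close>, of a c] a by auto
    then show ?thesis
      using that[of S "{c}"] \<open>r < card (star F c)\<close> assms(4) by auto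
  next
    case False
    then have "(\<Sum>x\<in>C. card (star F x)) < (\<Sum>x\<in>C. r)"
      using a by (intro sum_strict_mono_ex1[OF assms(1)]) (auto simp: not_less)
    moreover obtain S where "S \<in> F" "a \<notin> S" "insert a S \<notin> F"
      using exists_extension[OF \<open>finite F\<close>, of a] a assms(3) by auto
    ultimately show ?thesis
      using that[of S "{}"] handshake by auto
  qed
  define F' where "F' = insert (insert a (S - X)) (F - {S})"
  have "finite S" using S(1) assms(1,2) finite_subset by blast
  then have "card (insert a (S - X)) + card X = card S + 1"
    using S(2,3) card_Diff_subset[of X S] card_mono[of S X] by (simp add: finite_subset)
  then have "(\<Sum>T\<in>F'. card T) \<le> card C * r"
    using exchange_family(2)[OF \<open>finite F\<close> S(1,4)] S(6) by (simp add: F'_def)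
  moreover have "F' \<subseteq> Pow C" using assms(2) S(1) a(1) by (auto simp: F'_def)
  moreover have "card F' = card F"
    using exchange_family(1)[OF \<open>finite F\<close> S(1,4)] by (simp add: F'_def)
  moreover have "imbalance C r F' < imbalance C r F"
    unfolding F'_def by (rule imbalance_exchange_less) (use assms(1,2) S a in auto)
  ultimately show ?thesis by blast
qed

lemma exists_regular_family:
  assumes "finite C" "F \<subseteq> Pow C" "2 * r \<le> card F" "(\<Sum>S\<in>F. card S) \<le> card C * r"
  shows "\<exists>F' \<subseteq> Pow C. card F' = card F \<and> (\<forall>a\<in>C. card (star F' a) = r)"
  using assms(2-4)
proof (induction "imbalance C r F" arbitrary: F rule: less_induct)
  case less
  show ?case
  proof (cases "\<forall>a\<in>C. card (star F a) = r")
    case True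
    then show ?thesis using less.prems(1) by blast
  next
    case False
    then obtain F' where "F' \<subseteq> Pow C" "card F' = card F" "(\<Sum>S\<in>F'. card S) \<le> card C * r"
        "imbalance C r F' < imbalance C r F"
      using imbalance_decreasing_step[OF assms(1) less.prems] by blast
    then show ?thesis using less.hyps[of F'] less.prems(2) by auto
  qed
qed

lemma star_eq_iff: "star B x = star B y \<longleftrightarrow> (\<forall>A\<in>B. x \<in> A \<longleftrightarrow> y \<in> A)"
  by (auto simp: star_def)

lemma star_apply_eq:
  assumes "inj g" "\<forall>A\<in>B. g ` A = A"
  shows "star B (g x) = star B x"
  unfolding star_eq_iff using assms by (metis inj_image_mem_iff)

lemma transpose_image_eq_if_star_eq:
  "star B x = star B y \<Longrightarrow> \<forall>A\<in>B. transpose x y ` A = A"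
  by (simp add: star_eq_iff transpose_image_eq)

lemma is_base_Sym_iff:
  "is_base (Sym N) \<Omega> B \<longleftrightarrow> B \<subseteq> \<Omega> \<and> inj_on (star B) {1..N}"
proof (intro iffI conjI)
  assume base: "is_base (Sym N) \<Omega> B"
  then show "B \<subseteq> \<Omega>" by (simp add: is_base_def)
  show "inj_on (star B) {1..N}"
  proof (rule inj_onI, rule ccontr)
    fix x y assume "x \<in> {1..N}" "y \<in> {1..N}" "star B x = star B y" "x \<noteq> y"
    then have "transpose x y \<in> Sym N" "\<forall>A\<in>B. transpose x y ` A = A"
      by (simp_all add: Sym_def permutes_swap_id transpose_image_eq_if_star_eq)
    then have "transpose x y = id" using base by (simp add: is_base_def)
    then show False using \<open>x \<noteq> y\<close> by (metis id_apply transpose_apply_first)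
  qed
next
  assume sep: "B \<subseteq> \<Omega> \<and> inj_on (star B) {1..N}"
  have "g = id" if g: "g permutes {1..N}" "\<forall>A\<in>B. g ` A = A" for g
  proof
    fix x
    show "g x = id x"
    proof (cases "x \<in> {1..N}")
      case True
      then have "g x \<in> {1..N}" using permutes_in_image[OF g(1)] by blast
      moreover have "star B (g x) = star B x" using star_apply_eq[OF permutes_inj[OF g(1)] g(2)] .
      ultimately show ?thesis using sep True by (auto dest: inj_onD)
    qed (simp add: permutes_not_in[OF g(1)])
  qed
  then show "is_base (Sym N) \<Omega> B" using sep by (simp add: is_base_def Sym_def)
qed

lemma transpose_if_fixes_all_but:
  assumes "inj g" "\<And>x. x \<noteq> y \<Longrightarrow> g x \<noteq> y \<Longrightarrow> g x = x"
  shows "\<exists>z. g = transpose y z"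
proof (cases "g y = y")
  case True
  then have "g x = x" for x using assms by (metis injD)
  then show ?thesis by (intro exI[of _ y]) auto
next
  case False
  define z where "z = g y"
  have "g z = y" using assms False unfolding z_def by (metis injD)
  moreover have "g x = x" if "x \<noteq> y" "x \<noteq> z" for x
    using assms that \<open>g z = y\<close> by (metis injD)
  ultimately have "g x = transpose y z x" for x
    using z_def by (cases "x = y \<or> x = z") auto
  then show ?thesis by blast
qed

lemma inj_on_star_Diff_if_is_base_Alt:
  assumes base: "is_base (Alt N) \<Omega> B"
  shows "\<exists>y. inj_on (star B) ({1..N} - {y})"
proof (cases "inj_on (star B) {1..N}")
  case True
  then show ?thesis by (meson Diff_subset inj_on_subset)
next
  case False
  then obtain x y where xy: "x \<in> {1..N}" "y \<in> {1..N}" "x \<noteq> y" "star B x = star B y"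
    by (auto simp: inj_on_def)
  \<comment> \<open>A second collision u, v would make the even permutation (x y)(u v) fix every member of B.\<close>
  have "inj_on (star B) ({1..N} - {y})"
  proof (rule inj_onI, rule ccontr)
    fix u v assume uv: "u \<in> {1..N} - {y}" "v \<in> {1..N} - {y}" "star B u = star B v" "u \<noteq> v"
    obtain w w' where ww: "w \<in> {u, v}" "w' \<in> {u, v}" "w \<noteq> w'" "w \<noteq> x"
      using uv(4) by (cases "u = x") auto
    then have w: "w \<in> {1..N} - {y}" "w' \<in> {1..N} - {y}" "star B w = star B w'"
      using uv by auto
    define g where "g = transpose x y \<circ> transpose w w'"
    have "g permutes {1..N}"
      unfolding g_def using xy w by (intro permutes_compose permutes_swap_id) auto
    moreover have "evenperm g"
      unfolding g_def using xy(3) ww(3)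
      by (simp add: evenperm_comp permutation_swap_id evenperm_swap)
    moreover have "\<forall>A\<in>B. g ` A = A"
      using transpose_image_eq_if_star_eq[OF xy(4)] transpose_image_eq_if_star_eq[OF w(3)]
      by (metis g_def image_comp)
    ultimately have "g = id" using base by (simp add: is_base_def Alt_def)
    moreover have "g w \<noteq> w"
      using ww w by (cases "w' = x") (auto simp: g_def)
    ultimately show False by simp
  qed
  then show ?thesis ..
qed

lemma is_base_Alt_iff:
  "is_base (Alt N) \<Omega> B \<longleftrightarrow> B \<subseteq> \<Omega> \<and> (\<exists>y. inj_on (star B) ({1..N} - {y}))"
proof (intro iffI conjI)
  assume base: "is_base (Alt N) \<Omega> B"
  then show "B \<subseteq> \<Omega>" by (simp add: is_base_def)
  show "\<exists>y. inj_on (star B) ({1..N} - {y})" using inj_on_star_Diff_if_is_base_Alt[OF base] .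
next
  assume "B \<subseteq> \<Omega> \<and> (\<exists>y. inj_on (star B) ({1..N} - {y}))"
  then obtain y where sep: "B \<subseteq> \<Omega>" "inj_on (star B) ({1..N} - {y})" by blast
  have "g = id" if g: "g permutes {1..N}" "evenperm g" "\<forall>A\<in>B. g ` A = A" for g
  proof -
    have "g x = x" if "x \<noteq> y" "g x \<noteq> y" for x
    proof (cases "x \<in> {1..N}")
      case True
      then have "g x \<in> {1..N}" using permutes_in_image[OF g(1)] by blast
      moreover have "star B (g x) = star B x" using star_apply_eq[OF permutes_inj[OF g(1)] g(3)] .
      ultimately show ?thesis using sep(2) True that by (auto dest: inj_onD)
    qed (simp add: permutes_not_in[OF g(1)])
    then obtain z where "g = transpose y z"
      using transpose_if_fixes_all_but[OF permutes_inj[OF g(1)]] by blast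
    with g(2) show "g = id" by (simp add: evenperm_swap)
  qed
  then show "is_base (Alt N) \<Omega> B" using sep(1) by (simp add: is_base_def Alt_def)
qed

lemma good_l_of_separating:
  assumes "finite B" "B \<subseteq> r_subsets N r" "D \<subseteq> {1..N}" "inj_on (star B) D" "n \<le> card D"
    and "2 * r \<le> n" "0 < r"
  shows "0 < card B \<and> good_l n r (card B)"
proof -
  have "B \<subseteq> Pow {1..N}" using assms(2) by (auto simp: r_subsets_def)
  have "(\<Sum>v\<in>star B ` D. card v) = (\<Sum>x\<in>D. card (star B x))"
    using sum.reindex[OF assms(4)] by simp
  also have "\<dots> \<le> (\<Sum>x\<in>{1..N}. card (star B x))"
    using assms(3) by (intro sum_mono2) auto
  also have "\<dots> = (\<Sum>A\<in>B. card A)"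
    using sum_card_eq_sum_card_star[OF _ \<open>B \<subseteq> Pow {1..N}\<close>] by simp
  also have "\<dots> = (\<Sum>A\<in>B. r)"
    using assms(2) by (intro sum.cong) (auto simp: r_subsets_def)
  finally have "(\<Sum>v\<in>star B ` D. card v) \<le> card B * r" by simp
  moreover have "star B ` D \<subseteq> Pow B" by (auto simp: star_def)
  moreover have "n \<le> card (star B ` D)" using assms(4,5) by (simp add: card_image)
  ultimately show ?thesis using good_l_of_family[OF assms(1)] assms(6,7) by blast
qed

lemma separating_r_subsets_of_regular_family:
  assumes "finite C" "F \<subseteq> Pow C" "card F = n" "\<forall>a\<in>C. card (star F a) = r"
  shows "\<exists>B \<subseteq> r_subsets n r. card B \<le> card C \<and> inj_on (star B) {1..n}"
proof -
  have "finite F" using assms(1,2) finite_subset by blast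
  then obtain h where h: "bij_betw h {1..n} F"
    using ex_bij_betw_nat_finite_1 assms(3) by blast
  define dual where "dual a = {x\<in>{1..n}. a \<in> h x}" for a
  define B where "B = dual ` C"
  have "card (dual a) = r" if "a \<in> C" for a
  proof -
    have "h ` dual a = star F a"
      using h by (auto simp: dual_def star_def bij_betw_def)
    moreover have "inj_on h (dual a)"
      using h by (auto simp: dual_def bij_betw_def intro: inj_on_subset)
    ultimately show ?thesis using assms(4) that by (metis card_image)
  qed
  then have "B \<subseteq> r_subsets n r" by (auto simp: B_def r_subsets_def dual_def)
  moreover have "card B \<le> card C" by (simp add: B_def card_image_le assms(1))
  moreover have "inj_on (star B) {1..n}"
  proof (rule inj_onI)
    fix x y assume xy: "x \<in> {1..n}" "y \<in> {1..n}" "star B x = star B y"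
    then have "\<forall>a\<in>C. a \<in> h x \<longleftrightarrow> a \<in> h y"
      by (auto simp: star_eq_iff B_def dual_def)
    moreover have "h x \<in> F" "h y \<in> F"
      using xy(1,2) h by (auto dest: bij_betwE)
    then have "h x \<subseteq> C" "h y \<subseteq> C" using assms(2) by auto
    ultimately have "h x = h y" by blast
    then show "x = y" using h xy(1,2) by (auto simp: bij_betw_def dest: inj_onD)
  qed
  ultimately show ?thesis by blast
qed

lemma base_size_eqI:
  assumes "is_base G \<Omega> B" "finite B" "card B \<le> l"
    and "\<And>B'. is_base G \<Omega> B' \<Longrightarrow> finite B' \<Longrightarrow> l \<le> card B'"
  shows "base_size G \<Omega> = l"
  unfolding base_size_def
proof (rule Least_equality)
  show "\<exists>B. is_base G \<Omega> B \<and> finite B \<and> card B = l"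
    using assms(1-3) assms(4)[OF assms(1,2)] by (intro exI[of _ B]) simp
qed (use assms(4) in blast)

lemma good_l_of_base_Sym:
  assumes "is_base (Sym n) (r_subsets n r) B" "finite B" "2 * r \<le> n" "0 < r"
  shows "0 < card B \<and> good_l n r (card B)"
  using good_l_of_separating[of B n r "{1..n}"] assms by (auto simp: is_base_Sym_iff)

lemma good_l_of_base_Alt:
  assumes "is_base (Alt (n + 1)) (r_subsets (n + 1) r) B" "finite B" "2 * r \<le> n" "0 < r"
  shows "0 < card B \<and> good_l n r (card B)"
proof -
  obtain y where "B \<subseteq> r_subsets (n + 1) r" "inj_on (star B) ({1..n + 1} - {y})"
    using assms(1) by (auto simp: is_base_Alt_iff)
  moreover have "n \<le> card ({1..n + 1} - {y})" by (simp add: card_Diff_singleton_if)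
  ultimately show ?thesis using good_l_of_separating assms(2-4) by blast
qed

lemma separating_r_subsets_of_good_l:
  assumes "good_l n r l" "2 * r \<le> n"
  shows "\<exists>B \<subseteq> r_subsets n r. card B \<le> l \<and> inj_on (star B) {1..n}"
proof -
  obtain F where "F \<subseteq> Pow {1..l}" "card F = n" "(\<Sum>S\<in>F. card S) \<le> l * r"
    using family_of_good_l[of "{1..l}"] assms(1) by auto
  then obtain F' where "F' \<subseteq> Pow {1..l}" "card F' = n" "\<forall>a\<in>{1..l}. card (star F' a) = r"
    using exists_regular_family[of "{1..l}" F r] assms(2) by auto
  then show ?thesis using separating_r_subsets_of_regular_family[of "{1..l}" F'] by auto
qed

lemma is_base_of_separating:
  assumes "B \<subseteq> r_subsets n r" "inj_on (star B) {1..n}"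
  shows "is_base (Sym n) (r_subsets n r) B" "is_base (Alt (n + 1)) (r_subsets (n + 1) r) B"
proof -
  show "is_base (Sym n) (r_subsets n r) B" using assms by (simp add: is_base_Sym_iff)
  have "{1..n + 1} - {n + 1} = {1..n}" by auto
  moreover have "r_subsets n r \<subseteq> r_subsets (n + 1) r" by (auto simp: r_subsets_def)
  ultimately show "is_base (Alt (n + 1)) (r_subsets (n + 1) r) B"
    using assms by (auto simp: is_base_Alt_iff intro: exI[of _ "n + 1"])
qed

theorem theorem1p1:
  fixes n r l :: nat
  assumes "0 < n" and "0 < r" and "n \<ge> 2 * r"
    and "0 < l" and "good_l n r l"
    and "\<forall>l'. 0 < l' \<and> l' < l \<longrightarrow> \<not> good_l n r l'"
  shows "base_size (Sym n) (r_subsets n r) = l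
       \<and> base_size (Alt (n + 1)) (r_subsets (n + 1) r) = l"
proof -
  obtain B where B: "B \<subseteq> r_subsets n r" "card B \<le> l" "inj_on (star B) {1..n}"
    using separating_r_subsets_of_good_l assms(3,5) by blast
  have "finite B" using B(1) finite_subset[of B "Pow {1..n}"] by (auto simp: r_subsets_def)
  have minimal: "l \<le> card B'" if "0 < card B' \<and> good_l n r (card B')" for B'
    using that assms(6) by (meson not_le)
  have "base_size (Sym n) (r_subsets n r) = l"
    using is_base_of_separating(1)[OF B(1,3)] \<open>finite B\<close> B(2)
    by (rule base_size_eqI) (use minimal good_l_of_base_Sym assms(2,3) in blast)
  moreover have "base_size (Alt (n + 1)) (r_subsets (n + 1) r) = l"
    using is_base_of_separating(2)[OF B(1,3)] \<open>finite B\<close> B(2)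
    by (rule base_size_eqI) (use minimal good_l_of_base_Alt assms(2,3) in blast)
  ultimately show ?thesis ..
qed

end
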